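(* Assume Assumption (I), and let $(L_k,u_k)$ be a sequence generated by Algorithm A. Then \[ \sum_{k=1}^\infty\Big(\frac\alpha2\|u_{k+1}-u_k\|_V^2+\beta\int_\Omega\psi_{\epsilon_k}'(u_k^2)(u_{k+1}-u_k)^2\,dx\Big)<\infty . \]
   Context: Standing assumptions: $\Omega\subset\mathbb R^d$ bounded Lipschitz domain; $V$ real Hilbert space with inner product $\langle\cdot,\cdot\rangle_V$, $V\subset L^2(\Omega)$ with compact and dense embedding; $V^*$ dual. $F:V\to\mathbb R$ weakly lower semicontinuous, bounded below by an affine function, continuously Fréchet differentiable. $\alpha>0$, $\beta>0$, $p\in(0,1)$. Assumption (I): the standing assumptions hold; $F'$ is completely continuous ($u_n\rightharpoonup u$ in $V$ implies $F'(u_n)\to F'(u)$ in $V^*$); and $F':V\to V^*$ is Lipschitz continuous on bounded sets. For $\epsilon>0$, $\psi_\epsilon(t)=\frac p2\frac{t}{\epsilon^{2-p}}+(1-\frac p2)\epsilon^p$ if $t\in[0,\epsilon^2)$, $\psi_\epsilon(t)=t^{p/2}$ if $t\ge\epsilon^2$, $\psi_\epsilon'(t)=\frac p2\min(\epsilon^{p-2},t^{(p-2)/2})$. Algorithm A: choose a monotonically decreasing sequence $\epsilon_k\searrow0$, constants $\gamma>1$, $\tilde L>0$, and $u_0\in V$. Given $u_k$, for $L\ge0$ let problem (Q$_{k,L}$) be $\min_{u\in V} F(u_k)+F'(u_k)(u-u_k)+\frac L2\|u-u_k\|_V^2+\frac\alpha2\|u\|_V^2+\beta\int_\Omega\big[\psi_{\epsilon_k}(u_k^2)+\psi_{\epsilon_k}'(u_k^2)(u^2-u_k^2)\big]dx$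 (strongly convex, unique minimizer), and let (D$_{k,L}$) be the condition $F(u_{k+1})\le F(u_k)+F'(u_k)(u_{k+1}-u_k)+L\|u_{k+1}-u_k\|_V^2$ for its minimizer $u_{k+1}$. $L_k$ is the smallest $L\in\{0\}\cup\{\tilde L\gamma^l:l\ge0\}$ for which (D$_{k,L}$) holds, and $u_{k+1}$ is the corresponding minimizer; then $k\mapsto k+1$. *)

theory Defs
  imports "HOL-Analysis.Analysis"
begin

definition lipschitz_domain :: "'d::euclidean_space set \<Rightarrow> bool" where
  "lipschitz_domain \<Omega> \<longleftrightarrow> \<Omega> \<noteq> {} \<and> open \<Omega> \<and> connected \<Omega> \<and> bounded \<Omega> \<and>
     (\<forall>x\<in>frontier \<Omega>. \<exists>r>0. \<exists>e g M. norm e = 1 \<and> M-lipschitz_on UNIV g \<and>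
        \<Omega> \<inter> ball x r = {y \<in> ball x r. y \<bullet> e < g (y - (y \<bullet> e) *\<^sub>R e)})"

definition square_int :: "'d::euclidean_space set \<Rightarrow> ('d \<Rightarrow> real) \<Rightarrow> bool" where
  "square_int \<Omega> f \<longleftrightarrow> f \<in> borel_measurable (lebesgue_on \<Omega>) \<and>
     integrable (lebesgue_on \<Omega>) (\<lambda>x. (f x)\<^sup>2)"

text \<open>E realises the compact, dense embedding of V into L2(Omega): pointwise representatives,
  linear, injective modulo null sets, compact (bounded sequences have L2-convergent
  subsequences) and with dense image.\<close>
definition compact_dense_embedding ::
  "'d::euclidean_space set \<Rightarrow> ('v::real_normed_vector \<Rightarrow> 'd \<Rightarrow> real) \<Rightarrow> bool" where
  "compact_dense_embedding \<Omega> E \<longleftrightarrow>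
     (\<forall>u. square_int \<Omega> (E u)) \<and>
     (\<forall>a b u v x. E (a *\<^sub>R u + b *\<^sub>R v) x = a * E u x + b * E v x) \<and>
     (\<forall>u. (AE x in lebesgue_on \<Omega>. E u x = 0) \<longrightarrow> u = 0) \<and>
     (\<forall>w::nat \<Rightarrow> 'v. bounded (range w) \<longrightarrow>
        (\<exists>r f. strict_mono r \<and> square_int \<Omega> f \<and>
           (\<lambda>n. integral\<^sup>L (lebesgue_on \<Omega>) (\<lambda>x. (E (w (r n)) x - f x)\<^sup>2)) \<longlonglongrightarrow> 0)) \<and>
     (\<forall>f. square_int \<Omega> f \<longrightarrow>
        (\<forall>e>0. \<exists>u. integral\<^sup>L (lebesgue_on \<Omega>) (\<lambda>x. (E u x - f x)\<^sup>2) < e))"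

definition weakly_conv :: "(nat \<Rightarrow> 'v::real_inner) \<Rightarrow> 'v \<Rightarrow> bool" where
  "weakly_conv u x \<longleftrightarrow> (\<forall>w. (\<lambda>n. inner (u n) w) \<longlonglongrightarrow> inner x w)"

definition assumption_I :: "('v::{real_inner,complete_space} \<Rightarrow> real) \<Rightarrow> ('v \<Rightarrow> ('v \<Rightarrow>\<^sub>L real)) \<Rightarrow> bool" where
  "assumption_I F F' \<longleftrightarrow>
     (\<forall>u x. weakly_conv u x \<longrightarrow> ereal (F x) \<le> liminf (\<lambda>n. ereal (F (u n)))) \<and>
     (\<exists>(lf::'v \<Rightarrow>\<^sub>L real) c. \<forall>u. F u \<ge> blinfun_apply lf u + c) \<and>
     (\<forall>u. (F has_derivative blinfun_apply (F' u)) (at u)) \<and>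
     continuous_on UNIV F' \<and>
     (\<forall>u x. weakly_conv u x \<longrightarrow> (\<lambda>n. F' (u n)) \<longlonglongrightarrow> F' x) \<and>
     (\<forall>B. bounded B \<longrightarrow> (\<exists>M. M-lipschitz_on B F'))"

definition psi :: "real \<Rightarrow> real \<Rightarrow> real \<Rightarrow> real" where
  "psi p \<epsilon> t = (if t < \<epsilon>\<^sup>2 then p / 2 * t / \<epsilon> powr (2 - p) + (1 - p / 2) * \<epsilon> powr p
                  else t powr (p / 2))"

definition dpsi :: "real \<Rightarrow> real \<Rightarrow> real \<Rightarrow> real" where
  "dpsi p \<epsilon> t = p / 2 * (if t < \<epsilon>\<^sup>2 then \<epsilon> powr (p - 2) else t powr ((p - 2) / 2))"

definition Qobj ::
  "'d::euclidean_space set \<Rightarrow> ('v::real_inner \<Rightarrow> 'd \<Rightarrow> real) \<Rightarrow> ('v \<Rightarrow> real) \<Rightarrow> ('v \<Rightarrow> ('v \<Rightarrow>\<^sub>L real))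
    \<Rightarrow> real \<Rightarrow> real \<Rightarrow> real \<Rightarrow> real \<Rightarrow> real \<Rightarrow> 'v \<Rightarrow> 'v \<Rightarrow> real" where
  "Qobj \<Omega> E F F' \<alpha> \<beta> p \<epsilon> L uk u =
     F uk + blinfun_apply (F' uk) (u - uk) + L / 2 * (norm (u - uk))\<^sup>2 + \<alpha> / 2 * (norm u)\<^sup>2
     + \<beta> * integral\<^sup>L (lebesgue_on \<Omega>)
         (\<lambda>x. psi p \<epsilon> ((E uk x)\<^sup>2) + dpsi p \<epsilon> ((E uk x)\<^sup>2) * ((E u x)\<^sup>2 - (E uk x)\<^sup>2))"

definition descent_cond :: "('v::real_normed_vector \<Rightarrow> real) \<Rightarrow> ('v \<Rightarrow> ('v \<Rightarrow>\<^sub>L real)) \<Rightarrow> real \<Rightarrow> 'v \<Rightarrow> 'v \<Rightarrow> bool" where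
  "descent_cond F F' L uk unew \<longleftrightarrow>
     F unew \<le> F uk + blinfun_apply (F' uk) (unew - uk) + L * (norm (unew - uk))\<^sup>2"

definition generated_by_algA ::
  "'d::euclidean_space set \<Rightarrow> ('v::real_inner \<Rightarrow> 'd \<Rightarrow> real) \<Rightarrow> ('v \<Rightarrow> real) \<Rightarrow> ('v \<Rightarrow> ('v \<Rightarrow>\<^sub>L real))
    \<Rightarrow> real \<Rightarrow> real \<Rightarrow> real \<Rightarrow> (nat \<Rightarrow> real) \<Rightarrow> real \<Rightarrow> real \<Rightarrow> (nat \<Rightarrow> real) \<Rightarrow> (nat \<Rightarrow> 'v) \<Rightarrow> bool" where
  "generated_by_algA \<Omega> E F F' \<alpha> \<beta> p eps \<gamma> Lt L u \<longleftrightarrow>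
     decseq eps \<and> (\<forall>k. eps k > 0) \<and> eps \<longlonglongrightarrow> 0 \<and> \<gamma> > 1 \<and> Lt > 0 \<and>
     (\<forall>k. L k \<in> insert 0 (range (\<lambda>l::nat. Lt * \<gamma> ^ l)) \<and>
          (\<forall>v. Qobj \<Omega> E F F' \<alpha> \<beta> p (eps k) (L k) (u k) (u (Suc k))
                \<le> Qobj \<Omega> E F F' \<alpha> \<beta> p (eps k) (L k) (u k) v) \<and>
          descent_cond F F' (L k) (u k) (u (Suc k)) \<and>
          (\<forall>L' \<in> insert 0 (range (\<lambda>l::nat. Lt * \<gamma> ^ l)). L' < L k \<longrightarrow>
             (\<forall>w. (\<forall>v. Qobj \<Omega> E F F' \<alpha> \<beta> p (eps k) L' (u k) w
                       \<le> Qobj \<Omega> E F F' \<alpha> \<beta> p (eps k) L' (u k) v)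
                  \<longrightarrow> \<not> descent_cond F F' L' (u k) w)))"

end

theory Submission
  imports Defs
begin

(*
  The smoothing psi_eps is concave on [0, oo): psi_eps(t) is the value at t of the tangent to
  s powr (p/2) at s = max eps^2 t, and all these tangents lie above psi_eps.  Hence its linearization at u_k overestimates it, and together with the descent
  condition (D_{k,L}) the model (Q_{k,L}) plus L/2 |u - u_k|^2 bounds the merit functional
  merit_eps(u) = F u + alpha/2 |u|^2 + beta * int psi_eps(u^2) from above.  Minimality of u_{k+1} for
  the quadratic model, read along the segment to u_k, gives
  Q(u_k) - Q(u_{k+1}) >= (L + alpha)/2 |u_{k+1} - u_k|^2 + beta * int psi_eps'(u_k^2) (u_{k+1} - u_k)^2,
  so the k-th summand is at most merit_{eps_k}(u_k) - merit_{eps_k}(u_{k+1}), which is at most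
  merit_{eps_k}(u_k) - merit_{eps_{k+1}}(u_{k+1}) since psi_eps grows with eps.  The series telescopes,
  and the merit is bounded below because F is bounded below by an affine function.
*)

definition powr_tangent :: "real \<Rightarrow> real \<Rightarrow> real \<Rightarrow> real" where
  "powr_tangent q r s = r powr q + q * r powr (q - 1) * (s - r)"

lemma powr_tangent_affine:
  "powr_tangent q r s = powr_tangent q r t + q * r powr (q - 1) * (s - t)"
  unfolding powr_tangent_def by (simp add: algebra_simps)

lemma powr_tangent_self: "powr_tangent q r r = r powr q"
  by (simp add: powr_tangent_def)

lemma powr_eq_mult_powr_minus_1: "0 < (r::real) \<Longrightarrow> r powr q = r * r powr (q - 1)"
  using powr_mult_base[of r "q - 1"] by simp

lemma powr_le_powr_tangent:
  assumes q: "0 < q" "q < 1" and r: "0 < r" and s: "0 \<le> s"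
  shows "s powr q \<le> powr_tangent q r s"
proof (cases "s = 0")
  case True
  then show ?thesis
    using q r by (simp add: powr_tangent_def powr_eq_mult_powr_minus_1[of r q] algebra_simps)
next
  case False
  with s have "0 < s" by simp
  then have young: "s powr q * r powr (1 - q) \<le> q * s + (1 - q) * r"
    using Youngs_inequality_0[of q "1 - q" s r] q r by simp
  have "r powr (1 - q) * r powr (q - 1) = 1"
    using r by (simp flip: powr_add)
  then have "s powr q = (s powr q * r powr (1 - q)) * r powr (q - 1)"
    by (simp add: mult.assoc)
  also have "\<dots> \<le> (q * s + (1 - q) * r) * r powr (q - 1)"
    using young by (rule mult_right_mono) simp
  also have "\<dots> = powr_tangent q r s"
    using r by (simp add: powr_tangent_def powr_eq_mult_powr_minus_1[of r q] algebra_simps)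
  finally show ?thesis .
qed

lemma powr_tangent_mono:
  assumes q: "0 < q" "q < 1" and s: "0 \<le> s" "s \<le> r1" and r: "0 < r1" "r1 \<le> r2"
  shows "powr_tangent q r1 s \<le> powr_tangent q r2 s"
proof -
  have "r1 powr q \<le> powr_tangent q r2 r1"
    using powr_le_powr_tangent[OF q _ , of r2 r1] r by simp
  moreover have "r2 powr (q - 1) \<le> r1 powr (q - 1)"
    using q r by (intro powr_mono2') auto
  then have "0 \<le> q * (r1 - s) * (r1 powr (q - 1) - r2 powr (q - 1))"
    using q s by (intro mult_nonneg_nonneg) auto
  ultimately show ?thesis
    unfolding powr_tangent_affine[of q r2 s r1] powr_tangent_affine[of q r1 s r1] powr_tangent_self
    by (simp add: algebra_simps)
qed

lemma psi_eq_powr_tangent: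
  assumes "0 < \<epsilon>"
  shows "psi p \<epsilon> t = powr_tangent (p / 2) (max (\<epsilon>\<^sup>2) t) t"
proof (cases "t < \<epsilon>\<^sup>2")
  case True
  have "(\<epsilon>\<^sup>2) powr (p / 2) = \<epsilon> powr p"
    using assms by (simp add: powr_powr flip: powr_numeral)
  moreover have "(\<epsilon>\<^sup>2) powr (p / 2 - 1) = 1 / \<epsilon> powr (2 - p)"
    using assms by (simp add: powr_powr powr_minus_divide flip: powr_numeral) (simp add: powr_diff)
  moreover have "p * \<epsilon>\<^sup>2 / (2 * \<epsilon> powr (2 - p)) = p * \<epsilon> powr p / 2"
    using assms by (simp add: powr_diff flip: powr_numeral)
  ultimately show ?thesis
    using True by (simp add: psi_def powr_tangent_def max_def algebra_simps diff_divide_distrib)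
next
  case False
  then show ?thesis
    by (simp add: psi_def max_def powr_tangent_self)
qed

lemma dpsi_eq_powr_slope:
  assumes "0 < \<epsilon>"
  shows "dpsi p \<epsilon> t = p / 2 * max (\<epsilon>\<^sup>2) t powr (p / 2 - 1)"
proof -
  have "(\<epsilon>\<^sup>2) powr (p / 2 - 1) = \<epsilon> powr (p - 2)"
    using assms by (simp add: powr_powr flip: powr_numeral)
  then show ?thesis
    by (auto simp: dpsi_def max_def diff_divide_distrib)
qed

lemma psi_le_tangent_line:
  assumes \<epsilon>: "0 < \<epsilon>" and p: "0 < p" "p < 1" and s: "0 \<le> s" and t: "0 \<le> t"
  shows "psi p \<epsilon> s \<le> psi p \<epsilon> t + dpsi p \<epsilon> t * (s - t)"
proof -
  have q: "0 < p / 2" "p / 2 < 1" using p by auto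
  have m: "0 < max (\<epsilon>\<^sup>2) t" using \<epsilon> by (simp add: max.strict_coboundedI1)
  have "psi p \<epsilon> t + dpsi p \<epsilon> t * (s - t) = powr_tangent (p / 2) (max (\<epsilon>\<^sup>2) t) s"
    unfolding psi_eq_powr_tangent[OF \<epsilon>] dpsi_eq_powr_slope[OF \<epsilon>]
    by (simp add: powr_tangent_affine[of _ _ s t])
  moreover have "powr_tangent (p / 2) (max (\<epsilon>\<^sup>2) s) s \<le> powr_tangent (p / 2) (max (\<epsilon>\<^sup>2) t) s"
  proof (cases "s < \<epsilon>\<^sup>2")
    case True
    then show ?thesis
      using s \<epsilon> by (intro powr_tangent_mono[OF q]) auto
  next
    case False
    then show ?thesis
      using powr_le_powr_tangent[OF q m s] by (simp add: powr_tangent_self)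
  qed
  ultimately show ?thesis
    by (simp add: psi_eq_powr_tangent[OF \<epsilon>])
qed

lemma psi_mono_eps:
  assumes "0 < e1" "e1 \<le> e2" and p: "0 < p" "p < 1" and t: "0 \<le> t"
  shows "psi p e1 t \<le> psi p e2 t"
proof -
  have "e1\<^sup>2 \<le> e2\<^sup>2" using assms by (simp add: power_mono)
  then have "max (e1\<^sup>2) t \<le> max (e2\<^sup>2) t" by simp
  then show ?thesis
    using assms by (auto simp: psi_eq_powr_tangent max.strict_coboundedI1
        intro!: powr_tangent_mono)
qed

lemma psi_nonneg:
  assumes "0 < \<epsilon>" and p: "0 < p" "p < 1" and t: "0 \<le> t"
  shows "0 \<le> psi p \<epsilon> t"
proof -
  have "t powr (p / 2) \<le> powr_tangent (p / 2) (max (\<epsilon>\<^sup>2) t) t"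
    using assms by (intro powr_le_powr_tangent) (auto simp: max.strict_coboundedI1)
  then show ?thesis
    using assms(1) psi_eq_powr_tangent by (metis order_trans powr_ge_zero)
qed

lemma dpsi_nonneg: "0 \<le> p \<Longrightarrow> 0 \<le> dpsi p \<epsilon> t"
  by (simp add: dpsi_def)

lemma dpsi_le:
  assumes "0 < \<epsilon>" and "0 \<le> p" "p \<le> 2"
  shows "dpsi p \<epsilon> t \<le> p / 2 * (\<epsilon>\<^sup>2) powr (p / 2 - 1)"
  using assms by (auto simp: dpsi_eq_powr_slope intro!: mult_left_mono powr_mono2')

lemma integrable_bounded_weight_mult:
  fixes M :: "'a measure" and f g c :: "'a \<Rightarrow> real"
  assumes f: "f \<in> borel_measurable M" "integrable M (\<lambda>x. (f x)\<^sup>2)"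
    and g: "g \<in> borel_measurable M" "integrable M (\<lambda>x. (g x)\<^sup>2)"
    and c: "c \<in> borel_measurable M" "\<And>x. \<bar>c x\<bar> \<le> C"
  shows "integrable M (\<lambda>x. c x * f x * g x)"
proof (rule Bochner_Integration.integrable_bound)
  show "integrable M (\<lambda>x. C * ((f x)\<^sup>2 + (g x)\<^sup>2))"
    using f g by (intro integrable_mult_right Bochner_Integration.integrable_add)
  show "(\<lambda>x. c x * f x * g x) \<in> borel_measurable M"
    using f g c by measurable
  show "AE x in M. norm (c x * f x * g x) \<le> norm (C * ((f x)\<^sup>2 + (g x)\<^sup>2))"
  proof (intro AE_I2)
    fix x
    have "2 * \<bar>f x * g x\<bar> \<le> (f x)\<^sup>2 + (g x)\<^sup>2"
      using sum_squares_bound[of "\<bar>f x\<bar>" "\<bar>g x\<bar>"] by (simp add: abs_mult)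
    then have "\<bar>f x * g x\<bar> \<le> (f x)\<^sup>2 + (g x)\<^sup>2"
      using abs_ge_zero[of "f x * g x"] by linarith
    then have "\<bar>c x\<bar> * \<bar>f x * g x\<bar> \<le> C * ((f x)\<^sup>2 + (g x)\<^sup>2)"
      using c(2)[of x] by (intro mult_mono) auto
    moreover have "0 \<le> C" using c(2)[of x] by linarith
    ultimately show "norm (c x * f x * g x) \<le> norm (C * ((f x)\<^sup>2 + (g x)\<^sup>2))"
      by (simp add: abs_mult mult.assoc)
  qed
qed

lemma integrable_psi_square:
  fixes M :: "'a measure" and f :: "'a \<Rightarrow> real"
  assumes "finite_measure M" and f: "f \<in> borel_measurable M" "integrable M (\<lambda>x. (f x)\<^sup>2)"
    and \<epsilon>: "0 < \<epsilon>" and p: "0 < p" "p < 1"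
  shows "integrable M (\<lambda>x. psi p \<epsilon> ((f x)\<^sup>2))"
proof (rule Bochner_Integration.integrable_bound)
  show "integrable M (\<lambda>x. psi p \<epsilon> 0 + dpsi p \<epsilon> 0 * (f x)\<^sup>2)"
    using assms by (intro Bochner_Integration.integrable_add integrable_mult_right
        finite_measure.integrable_const)
  show "(\<lambda>x. psi p \<epsilon> ((f x)\<^sup>2)) \<in> borel_measurable M"
    using f unfolding psi_def by measurable
  show "AE x in M. norm (psi p \<epsilon> ((f x)\<^sup>2)) \<le> norm (psi p \<epsilon> 0 + dpsi p \<epsilon> 0 * (f x)\<^sup>2)"
  proof (intro AE_I2)
    fix x
    have "psi p \<epsilon> ((f x)\<^sup>2) \<le> psi p \<epsilon> 0 + dpsi p \<epsilon> 0 * (f x)\<^sup>2"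
      using psi_le_tangent_line[OF \<epsilon> p, of "(f x)\<^sup>2" 0] by simp
    then show "norm (psi p \<epsilon> ((f x)\<^sup>2)) \<le> norm (psi p \<epsilon> 0 + dpsi p \<epsilon> 0 * (f x)\<^sup>2)"
      using psi_nonneg[OF \<epsilon> p, of "(f x)\<^sup>2"] by simp
  qed
qed

lemma nonneg_linear_coeff_if_min_at_zero:
  fixes a b :: real
  assumes "\<And>t. 0 < t \<Longrightarrow> 0 \<le> a * t + b * t\<^sup>2"
  shows "0 \<le> a"
proof (rule ccontr)
  assume "\<not> 0 \<le> a"
  define t where "t = - a / (2 * (\<bar>b\<bar> + 1))"
  have t: "0 < t" using \<open>\<not> 0 \<le> a\<close> unfolding t_def by (intro divide_pos_pos) auto
  have "0 \<le> t * (a + b * t)"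
    using assms[OF t] by (simp add: power2_eq_square algebra_simps)
  then have "0 \<le> a + b * t" using t by (simp add: zero_le_mult_iff)
  moreover have "b * t \<le> \<bar>b\<bar> * t" using t by (intro mult_right_mono) auto
  moreover have "\<bar>b\<bar> * t < - a / 2"
    using \<open>\<not> 0 \<le> a\<close> by (simp add: t_def field_simps)
  ultimately show False using \<open>\<not> 0 \<le> a\<close> by linarith
qed

lemma summable_if_telescoping_bound:
  fixes T \<Phi> :: "nat \<Rightarrow> real"
  assumes "\<And>k. 0 \<le> T k" and "\<And>k. T k \<le> \<Phi> k - \<Phi> (Suc k)" and "\<And>k. m \<le> \<Phi> k"
  shows "summable T"
proof (rule bounded_imp_summable)
  fix n
  have "sum T {..n} \<le> (\<Sum>k<Suc n. \<Phi> k - \<Phi> (Suc k))"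
    unfolding lessThan_Suc_atMost by (intro sum_mono assms(2))
  also have "\<dots> = \<Phi> 0 - \<Phi> (Suc n)"
    using sum_lessThan_telescope[of "\<lambda>k. - \<Phi> k" "Suc n"] by simp
  finally show "sum T {..n} \<le> \<Phi> 0 - m"
    using assms(3)[of "Suc n"] by linarith
qed (use assms(1) in auto)

locale smoothed_problem =
  fixes \<Omega> :: "'d::euclidean_space set" and E :: "'v::real_inner \<Rightarrow> 'd \<Rightarrow> real"
    and F :: "'v \<Rightarrow> real" and F' :: "'v \<Rightarrow> ('v \<Rightarrow>\<^sub>L real)" and \<alpha> \<beta> p :: real
  assumes E_measurable: "\<And>v. E v \<in> borel_measurable (lebesgue_on \<Omega>)"
    and E_square_integrable: "\<And>v. integrable (lebesgue_on \<Omega>) (\<lambda>x. (E v x)\<^sup>2)"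
    and E_linear: "\<And>a b v w x. E (a *\<^sub>R v + b *\<^sub>R w) x = a * E v x + b * E w x"
    and finite_measure_\<Omega>: "finite_measure (lebesgue_on \<Omega>)"
    and alpha_pos: "0 < \<alpha>" and beta_pos: "0 < \<beta>" and p_pos: "0 < p" and p_less_1: "p < 1"
begin

definition merit :: "real \<Rightarrow> 'v \<Rightarrow> real" where
  "merit \<epsilon> v = F v + \<alpha> / 2 * (norm v)\<^sup>2
     + \<beta> * integral\<^sup>L (lebesgue_on \<Omega>) (\<lambda>x. psi p \<epsilon> ((E v x)\<^sup>2))"

abbreviation Q :: "real \<Rightarrow> real \<Rightarrow> 'v \<Rightarrow> 'v \<Rightarrow> real" where
  "Q \<equiv> Qobj \<Omega> E F F' \<alpha> \<beta> p"

lemma E_add_scaleR: "E (v + t *\<^sub>R w) x = E v x + t * E w x"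
  using E_linear[of 1 v t w x] by simp

lemma E_diff: "E (v - w) x = E v x - E w x"
  using E_linear[of 1 v "-1" w x] by simp

lemma integrable_psi: "0 < \<epsilon> \<Longrightarrow> integrable (lebesgue_on \<Omega>) (\<lambda>x. psi p \<epsilon> ((E v x)\<^sup>2))"
  by (rule integrable_psi_square[OF finite_measure_\<Omega> E_measurable E_square_integrable _ p_pos p_less_1])

lemma integrable_dpsi_mult:
  assumes "0 < \<epsilon>"
  shows "integrable (lebesgue_on \<Omega>) (\<lambda>x. dpsi p \<epsilon> ((E a x)\<^sup>2) * E v x * E w x)"
proof (rule integrable_bounded_weight_mult[OF E_measurable E_square_integrable
      E_measurable E_square_integrable])
  show "(\<lambda>x. dpsi p \<epsilon> ((E a x)\<^sup>2)) \<in> borel_measurable (lebesgue_on \<Omega>)"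
    using E_measurable unfolding dpsi_def by measurable
  show "\<bar>dpsi p \<epsilon> ((E a x)\<^sup>2)\<bar> \<le> p / 2 * (\<epsilon>\<^sup>2) powr (p / 2 - 1)" for x
    using dpsi_nonneg dpsi_le[OF assms] p_pos p_less_1 by (simp add: abs_of_nonneg)
qed

lemma integrable_linearized_psi:
  assumes \<epsilon>: "0 < \<epsilon>"
  shows "integrable (lebesgue_on \<Omega>)
    (\<lambda>x. psi p \<epsilon> ((E a x)\<^sup>2) + dpsi p \<epsilon> ((E a x)\<^sup>2) * ((E v x)\<^sup>2 - (E a x)\<^sup>2))"
proof -
  have "(\<lambda>x. psi p \<epsilon> ((E a x)\<^sup>2) + dpsi p \<epsilon> ((E a x)\<^sup>2) * ((E v x)\<^sup>2 - (E a x)\<^sup>2))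
      = (\<lambda>x. psi p \<epsilon> ((E a x)\<^sup>2) + (dpsi p \<epsilon> ((E a x)\<^sup>2) * E v x * E v x
           - dpsi p \<epsilon> ((E a x)\<^sup>2) * E a x * E a x))"
    by (simp add: power2_eq_square algebra_simps)
  then show ?thesis
    using integrable_psi[OF \<epsilon>] integrable_dpsi_mult[OF \<epsilon>] by simp
qed

lemma integral_linearized_psi_segment:
  assumes \<epsilon>: "0 < \<epsilon>"
  shows "integral\<^sup>L (lebesgue_on \<Omega>)
      (\<lambda>x. psi p \<epsilon> ((E a x)\<^sup>2) + dpsi p \<epsilon> ((E a x)\<^sup>2) * ((E (b + t *\<^sub>R h) x)\<^sup>2 - (E a x)\<^sup>2))
    = integral\<^sup>L (lebesgue_on \<Omega>)
        (\<lambda>x. psi p \<epsilon> ((E a x)\<^sup>2) + dpsi p \<epsilon> ((E a x)\<^sup>2) * ((E b x)\<^sup>2 - (E a x)\<^sup>2))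
      + 2 * t * integral\<^sup>L (lebesgue_on \<Omega>) (\<lambda>x. dpsi p \<epsilon> ((E a x)\<^sup>2) * E b x * E h x)
      + t\<^sup>2 * integral\<^sup>L (lebesgue_on \<Omega>) (\<lambda>x. dpsi p \<epsilon> ((E a x)\<^sup>2) * E h x * E h x)"
proof -
  have "(\<lambda>x. psi p \<epsilon> ((E a x)\<^sup>2) + dpsi p \<epsilon> ((E a x)\<^sup>2) * ((E (b + t *\<^sub>R h) x)\<^sup>2 - (E a x)\<^sup>2))
      = (\<lambda>x. (psi p \<epsilon> ((E a x)\<^sup>2) + dpsi p \<epsilon> ((E a x)\<^sup>2) * ((E b x)\<^sup>2 - (E a x)\<^sup>2))
           + 2 * t * (dpsi p \<epsilon> ((E a x)\<^sup>2) * E b x * E h x)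
           + t\<^sup>2 * (dpsi p \<epsilon> ((E a x)\<^sup>2) * E h x * E h x))"
    by (simp add: E_add_scaleR power2_eq_square algebra_simps)
  then show ?thesis
    using integrable_linearized_psi[OF \<epsilon>] integrable_dpsi_mult[OF \<epsilon>] by simp
qed

lemma Qobj_self: "Q \<epsilon> L a a = merit \<epsilon> a"
  by (simp add: Qobj_def merit_def)

lemma merit_le_Qobj:
  assumes \<epsilon>: "0 < \<epsilon>" and "descent_cond F F' L a b"
  shows "merit \<epsilon> b \<le> Q \<epsilon> L a b + L / 2 * (norm (b - a))\<^sup>2"
proof -
  have "integral\<^sup>L (lebesgue_on \<Omega>) (\<lambda>x. psi p \<epsilon> ((E b x)\<^sup>2))
     \<le> integral\<^sup>L (lebesgue_on \<Omega>)
          (\<lambda>x. psi p \<epsilon> ((E a x)\<^sup>2) + dpsi p \<epsilon> ((E a x)\<^sup>2) * ((E b x)\<^sup>2 - (E a x)\<^sup>2))"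
    using integrable_linearized_psi[OF \<epsilon>] integrable_psi[OF \<epsilon>]
      psi_le_tangent_line[OF \<epsilon> p_pos p_less_1] by (intro integral_mono) auto
  then have "\<beta> * integral\<^sup>L (lebesgue_on \<Omega>) (\<lambda>x. psi p \<epsilon> ((E b x)\<^sup>2))
     \<le> \<beta> * integral\<^sup>L (lebesgue_on \<Omega>)
          (\<lambda>x. psi p \<epsilon> ((E a x)\<^sup>2) + dpsi p \<epsilon> ((E a x)\<^sup>2) * ((E b x)\<^sup>2 - (E a x)\<^sup>2))"
    using beta_pos by simp
  with assms(2) show ?thesis
    by (simp add: merit_def Qobj_def descent_cond_def)
qed

lemma Qobj_along_segment:
  assumes \<epsilon>: "0 < \<epsilon>"
  obtains c where "\<And>t. Q \<epsilon> L a (b + t *\<^sub>R (a - b)) = Q \<epsilon> L a b + c * t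
    + ((L + \<alpha>) / 2 * (norm (b - a))\<^sup>2
       + \<beta> * integral\<^sup>L (lebesgue_on \<Omega>) (\<lambda>x. dpsi p \<epsilon> ((E a x)\<^sup>2) * (E b x - E a x)\<^sup>2)) * t\<^sup>2"
proof -
  define h where "h = a - b"
  define I where "I = integral\<^sup>L (lebesgue_on \<Omega>)
    (\<lambda>x. psi p \<epsilon> ((E a x)\<^sup>2) + dpsi p \<epsilon> ((E a x)\<^sup>2) * ((E b x)\<^sup>2 - (E a x)\<^sup>2))"
  define J where "J = integral\<^sup>L (lebesgue_on \<Omega>) (\<lambda>x. dpsi p \<epsilon> ((E a x)\<^sup>2) * E b x * E h x)"
  define K where "K = integral\<^sup>L (lebesgue_on \<Omega>) (\<lambda>x. dpsi p \<epsilon> ((E a x)\<^sup>2) * E h x * E h x)"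
  have "Q \<epsilon> L a (b + t *\<^sub>R h) = Q \<epsilon> L a b
      + (blinfun_apply (F' a) h - L * (norm h)\<^sup>2 + \<alpha> * inner b h + 2 * \<beta> * J) * t
      + ((L + \<alpha>) / 2 * (norm h)\<^sup>2 + \<beta> * K) * t\<^sup>2" (is "_ = _ + ?c * t + _") for t
  proof -
    have norm_segment: "(norm (b + t *\<^sub>R h))\<^sup>2 = (norm b)\<^sup>2 + 2 * t * inner b h + t\<^sup>2 * (norm h)\<^sup>2"
      unfolding power2_norm_eq_inner
      by (simp add: inner_add_left inner_add_right inner_commute power2_eq_square algebra_simps)
    have "b + t *\<^sub>R h - a = (t - 1) *\<^sub>R h" and "b - a = - h"
      by (simp_all add: h_def algebra_simps)
    then have Q_segment: "Q \<epsilon> L a (b + t *\<^sub>R h) = F a + (t - 1) * blinfun_apply (F' a) h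
          + L / 2 * ((t - 1)\<^sup>2 * (norm h)\<^sup>2)
          + \<alpha> / 2 * ((norm b)\<^sup>2 + 2 * t * inner b h + t\<^sup>2 * (norm h)\<^sup>2)
          + \<beta> * (I + 2 * t * J + t\<^sup>2 * K)"
      and Q_b: "Q \<epsilon> L a b = F a - blinfun_apply (F' a) h + L / 2 * (norm h)\<^sup>2
          + \<alpha> / 2 * (norm b)\<^sup>2 + \<beta> * I"
      unfolding Qobj_def integral_linearized_psi_segment[OF \<epsilon>] norm_segment I_def J_def K_def
      by (simp_all add: blinfun.scaleR_right blinfun.minus_right power_mult_distrib)
    show ?thesis
      unfolding Q_segment Q_b power2_eq_square by (simp add: algebra_simps)
  qed
  moreover have "K = integral\<^sup>L (lebesgue_on \<Omega>) (\<lambda>x. dpsi p \<epsilon> ((E a x)\<^sup>2) * (E b x - E a x)\<^sup>2)"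
    by (simp add: K_def h_def E_diff power2_eq_square algebra_simps)
  ultimately show ?thesis
    by (intro that[of ?c]) (simp add: h_def norm_minus_commute)
qed

text \<open>Along the segment from \<open>b\<close> to \<open>a\<close> the strongly convex model is a quadratic in \<open>t\<close> that is
  minimal at \<open>t = 0\<close>, so its slope there is nonnegative and the value at \<open>t = 1\<close> exceeds the minimum
  by at least the quadratic coefficient.\<close>
lemma Qobj_minimizer_gap:
  assumes \<epsilon>: "0 < \<epsilon>" and min: "\<And>v. Q \<epsilon> L a b \<le> Q \<epsilon> L a v"
  shows "(L + \<alpha>) / 2 * (norm (b - a))\<^sup>2
      + \<beta> * integral\<^sup>L (lebesgue_on \<Omega>) (\<lambda>x. dpsi p \<epsilon> ((E a x)\<^sup>2) * (E b x - E a x)\<^sup>2)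
    \<le> Q \<epsilon> L a a - Q \<epsilon> L a b"
proof -
  define A where "A = (L + \<alpha>) / 2 * (norm (b - a))\<^sup>2
    + \<beta> * integral\<^sup>L (lebesgue_on \<Omega>) (\<lambda>x. dpsi p \<epsilon> ((E a x)\<^sup>2) * (E b x - E a x)\<^sup>2)"
  obtain c where segment: "\<And>t. Q \<epsilon> L a (b + t *\<^sub>R (a - b)) = Q \<epsilon> L a b + c * t + A * t\<^sup>2"
    using Qobj_along_segment[OF \<epsilon>] unfolding A_def by blast
  have "0 \<le> c * t + A * t\<^sup>2" for t
    using min[of "b + t *\<^sub>R (a - b)"] segment[of t] by linarith
  then have "0 \<le> c"
    by (rule nonneg_linear_coeff_if_min_at_zero)
  then show ?thesis
    using segment[of 1] unfolding A_def by simp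
qed

lemma merit_decrease:
  assumes \<epsilon>: "0 < \<epsilon>" and min: "\<And>v. Q \<epsilon> L a b \<le> Q \<epsilon> L a v"
    and descent: "descent_cond F F' L a b"
  shows "\<alpha> / 2 * (norm (b - a))\<^sup>2
      + \<beta> * integral\<^sup>L (lebesgue_on \<Omega>) (\<lambda>x. dpsi p \<epsilon> ((E a x)\<^sup>2) * (E b x - E a x)\<^sup>2)
    \<le> merit \<epsilon> a - merit \<epsilon> b"
proof -
  have "(L + \<alpha>) / 2 * (norm (b - a))\<^sup>2 = L / 2 * (norm (b - a))\<^sup>2 + \<alpha> / 2 * (norm (b - a))\<^sup>2"
    by (simp add: add_divide_distrib distrib_right)
  then show ?thesis
    using Qobj_minimizer_gap[OF \<epsilon> min] merit_le_Qobj[OF \<epsilon> descent] Qobj_self[of \<epsilon> L a]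
    by linarith
qed

lemma merit_mono_eps:
  assumes "0 < e1" "e1 \<le> e2"
  shows "merit e1 v \<le> merit e2 v"
proof -
  have "integral\<^sup>L (lebesgue_on \<Omega>) (\<lambda>x. psi p e1 ((E v x)\<^sup>2))
      \<le> integral\<^sup>L (lebesgue_on \<Omega>) (\<lambda>x. psi p e2 ((E v x)\<^sup>2))"
    using assms integrable_psi psi_mono_eps[OF assms p_pos p_less_1]
    by (intro integral_mono) auto
  then show ?thesis
    using beta_pos by (simp add: merit_def)
qed

lemma merit_lower_bound:
  assumes F_ge: "\<And>v. blinfun_apply l v + c \<le> F v" and \<epsilon>: "0 < \<epsilon>"
  shows "c - (norm l)\<^sup>2 / (2 * \<alpha>) \<le> merit \<epsilon> v"
proof -
  have "- (norm l * norm v) \<le> blinfun_apply l v"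
    using norm_blinfun[of l v] by auto
  then have "c - norm l * norm v \<le> F v"
    using F_ge[of v] by linarith
  moreover have "(\<alpha> * norm v - norm l)\<^sup>2 / (2 * \<alpha>)
      = \<alpha> / 2 * (norm v)\<^sup>2 - norm l * norm v + (norm l)\<^sup>2 / (2 * \<alpha>)"
    using alpha_pos by (simp add: power2_diff field_simps power2_eq_square)
  moreover have "0 \<le> (\<alpha> * norm v - norm l)\<^sup>2 / (2 * \<alpha>)"
    using alpha_pos by simp
  moreover have "0 \<le> \<beta> * integral\<^sup>L (lebesgue_on \<Omega>) (\<lambda>x. psi p \<epsilon> ((E v x)\<^sup>2))"
    using beta_pos psi_nonneg[OF \<epsilon> p_pos p_less_1]
    by (intro mult_nonneg_nonneg integral_nonneg_AE AE_I2) auto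
  ultimately show ?thesis
    unfolding merit_def by linarith
qed

lemma summable_iterate_decrease:
  fixes eps L :: "nat \<Rightarrow> real" and u :: "nat \<Rightarrow> 'v"
  assumes F_ge: "\<And>v. blinfun_apply l v + c \<le> F v"
    and eps: "decseq eps" "\<And>k. 0 < eps k"
    and min: "\<And>k v. Q (eps k) (L k) (u k) (u (Suc k)) \<le> Q (eps k) (L k) (u k) v"
    and descent: "\<And>k. descent_cond F F' (L k) (u k) (u (Suc k))"
  shows "summable (\<lambda>k. \<alpha> / 2 * (norm (u (Suc k) - u k))\<^sup>2
    + \<beta> * integral\<^sup>L (lebesgue_on \<Omega>)
        (\<lambda>x. dpsi p (eps k) ((E (u k) x)\<^sup>2) * (E (u (Suc k)) x - E (u k) x)\<^sup>2))"
proof (rule summable_if_telescoping_bound)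
  fix k
  show "0 \<le> \<alpha> / 2 * (norm (u (Suc k) - u k))\<^sup>2
    + \<beta> * integral\<^sup>L (lebesgue_on \<Omega>)
        (\<lambda>x. dpsi p (eps k) ((E (u k) x)\<^sup>2) * (E (u (Suc k)) x - E (u k) x)\<^sup>2)"
    using alpha_pos beta_pos dpsi_nonneg p_pos
    by (intro add_nonneg_nonneg mult_nonneg_nonneg integral_nonneg_AE AE_I2) auto
  have "merit (eps (Suc k)) (u (Suc k)) \<le> merit (eps k) (u (Suc k))"
    using eps by (intro merit_mono_eps) (auto simp: decseq_SucD)
  then show "\<alpha> / 2 * (norm (u (Suc k) - u k))\<^sup>2
    + \<beta> * integral\<^sup>L (lebesgue_on \<Omega>)
        (\<lambda>x. dpsi p (eps k) ((E (u k) x)\<^sup>2) * (E (u (Suc k)) x - E (u k) x)\<^sup>2)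
    \<le> merit (eps k) (u k) - merit (eps (Suc k)) (u (Suc k))"
    using merit_decrease[OF eps(2) min descent, of k] by linarith
  show "c - (norm l)\<^sup>2 / (2 * \<alpha>) \<le> merit (eps k) (u k)"
    using merit_lower_bound[OF F_ge eps(2)] .
qed

end

theorem corollary7p6:
  fixes \<Omega> :: "'d::euclidean_space set"
    and E :: "'v::{real_inner,complete_space} \<Rightarrow> 'd \<Rightarrow> real"
    and F :: "'v \<Rightarrow> real" and F' :: "'v \<Rightarrow> ('v \<Rightarrow>\<^sub>L real)"
    and \<alpha> \<beta> p \<gamma> Lt :: real and eps L :: "nat \<Rightarrow> real" and u :: "nat \<Rightarrow> 'v"
  assumes "lipschitz_domain \<Omega>"
    and "compact_dense_embedding \<Omega> E"
    and "assumption_I F F'"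
    and "\<alpha> > 0" and "\<beta> > 0" and "0 < p" and "p < 1"
    and "generated_by_algA \<Omega> E F F' \<alpha> \<beta> p eps \<gamma> Lt L u"
  shows "summable (\<lambda>k. \<alpha> / 2 * (norm (u (Suc (Suc k)) - u (Suc k)))\<^sup>2
           + \<beta> * integral\<^sup>L (lebesgue_on \<Omega>)
               (\<lambda>x. dpsi p (eps (Suc k)) ((E (u (Suc k)) x)\<^sup>2) * (E (u (Suc (Suc k))) x - E (u (Suc k)) x)\<^sup>2))"
proof -
  have "\<And>v. E v \<in> borel_measurable (lebesgue_on \<Omega>)"
    and "\<And>v. integrable (lebesgue_on \<Omega>) (\<lambda>x. (E v x)\<^sup>2)"
    and "\<And>a b v w x. E (a *\<^sub>R v + b *\<^sub>R w) x = a * E v x + b * E w x"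
    using assms(2) unfolding compact_dense_embedding_def square_int_def by auto
  moreover have "finite_measure (lebesgue_on \<Omega>)"
    using assms(1) unfolding lipschitz_domain_def
    by (intro finite_measure_lebesgue_on lmeasurable_open) auto
  ultimately interpret smoothed_problem \<Omega> E F F' \<alpha> \<beta> p
    using assms(4-7) by (simp add: smoothed_problem_def)
  obtain l c where "\<And>v. blinfun_apply l v + c \<le> F v"
    using assms(3) unfolding assumption_I_def by blast
  moreover have "decseq eps" "\<And>k. 0 < eps k"
    and "\<And>k v. Q (eps k) (L k) (u k) (u (Suc k)) \<le> Q (eps k) (L k) (u k) v"
    and "\<And>k. descent_cond F F' (L k) (u k) (u (Suc k))"
    using assms(8) unfolding generated_by_algA_def by auto
  ultimately show ?thesis
    by (subst summable_Suc_iff) (rule summable_iterate_decrease)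
qed

end
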